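(* Let $\mu\in\mathcal{P}(\mathcal{X})$, $0<m_1\le m_2<\infty$, and let $\alpha,\tilde\alpha$ be tail functions with $\mu(B_{m_1})>0$ and $\alpha(r)>0$ for all $r>0$. Then $\mathcal{F}^{\mu}_{\alpha,\tilde\alpha}$ and $\mathcal{G}^{\mu}_{\alpha,\tilde\alpha}$ are cones in $L^2(\mu)$.
   Context: $\mathcal{X}$ is a Polish space with metric $d_{\mathcal{X}}$, $x_0\in\mathcal{X}$ fixed, $B_r=\{x:d_{\mathcal{X}}(x_0,x)\le r\}$, $B_r^{\mathsf c}=\mathcal{X}\setminus B_r$. A tail function is a non-increasing $\alpha:(0,\infty)\to[0,\infty)$ with $\lim_{r\to\infty}\alpha(r)=0$. $\mathcal{F}^{\mu}_{\alpha,\tilde\alpha}$ is the set of $f\in L^2(\mu)$ with $f\mathbf 1_{B_{m_2}}\ge0$ $\mu$-a.s., $\int_{B_r^{\mathsf c}}f_+\,d\mu\le\alpha(r)\int f\,d\mu$ for all $r\ge m_1$, and $\int_{B_r^{\mathsf c}}f_-\,d\mu\le\tilde\alpha(r)\int f\,d\mu$ for all $r\ge m_2$ ($f_+=\max\{f,0\}$, $f_-=-\min\{f,0\}$); $\mathcal{G}^{\mu}_{\alpha,\tilde\alpha}=\{g\in L^2(\mu):\int fg\,d\mu\ge0\text{ for all }f\in\mathcal{F}^{\mu}_{\alpha,\tilde\alpha}\}$. Elements of $L^2(\mu)$ are identified $\mu$-a.s. A cone in a Banach space $\mathsf Y$ is a closed convex set $C$ with $\lambda C\subseteq C$ for all $\lambda>0$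 and $C\cap -C=\{0\}$. *)

theory Defs
  imports "HOL-Probability.Probability"
begin

text \<open>Real-valued square-integrable functions; elements of L2(mu) are represented by
  representatives, and all notions below are invariant under mu-a.e. equality.\<close>
definition L2 :: "'a measure \<Rightarrow> ('a \<Rightarrow> real) set" where
  "L2 M = {f. f \<in> borel_measurable M \<and> integrable M (\<lambda>x. (f x)\<^sup>2)}"

definition L2_norm :: "'a measure \<Rightarrow> ('a \<Rightarrow> real) \<Rightarrow> real" where
  "L2_norm M f = sqrt (\<integral>x. (f x)\<^sup>2 \<partial>M)"

definition L2_cone :: "'a measure \<Rightarrow> ('a \<Rightarrow> real) set \<Rightarrow> bool" where
  "L2_cone M C \<longleftrightarrow>
     C \<subseteq> L2 M \<and>
     (\<forall>f g. (\<forall>n. f n \<in> C) \<and> g \<in> L2 M \<and>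
        (\<lambda>n. L2_norm M (\<lambda>x. f n x - g x)) \<longlonglongrightarrow> 0 \<longrightarrow> g \<in> C) \<and>
     (\<forall>f\<in>C. \<forall>g\<in>C. \<forall>t::real. 0 \<le> t \<and> t \<le> 1 \<longrightarrow> (\<lambda>x. t * f x + (1 - t) * g x) \<in> C) \<and>
     (\<forall>f\<in>C. \<forall>c::real. c > 0 \<longrightarrow> (\<lambda>x. c * f x) \<in> C) \<and>
     (\<lambda>x. 0) \<in> C \<and>
     (\<forall>f\<in>C. (\<lambda>x. - f x) \<in> C \<longrightarrow> (AE x in M. f x = 0))"

definition tail_function :: "(real \<Rightarrow> real) \<Rightarrow> bool" where
  "tail_function a \<longleftrightarrow>
     (\<forall>r s. 0 < r \<and> r \<le> s \<longrightarrow> a s \<le> a r) \<and>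
     (\<forall>r>0. 0 \<le> a r) \<and>
     (a \<longlongrightarrow> 0) at_top"

definition Fset :: "'a::metric_space measure \<Rightarrow> 'a \<Rightarrow> real \<Rightarrow> real \<Rightarrow>
    (real \<Rightarrow> real) \<Rightarrow> (real \<Rightarrow> real) \<Rightarrow> ('a \<Rightarrow> real) set" where
  "Fset M x0 m1 m2 a b = {f \<in> L2 M.
     (AE x in M. x \<in> cball x0 m2 \<longrightarrow> 0 \<le> f x) \<and>
     (\<forall>r\<ge>m1. (\<integral>x. indicator (- cball x0 r) x * max (f x) 0 \<partial>M) \<le> a r * (\<integral>x. f x \<partial>M)) \<and>
     (\<forall>r\<ge>m2. (\<integral>x. indicator (- cball x0 r) x * max (- f x) 0 \<partial>M) \<le> b r * (\<integral>x. f x \<partial>M))}"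

definition Gset :: "'a::metric_space measure \<Rightarrow> 'a \<Rightarrow> real \<Rightarrow> real \<Rightarrow>
    (real \<Rightarrow> real) \<Rightarrow> (real \<Rightarrow> real) \<Rightarrow> ('a \<Rightarrow> real) set" where
  "Gset M x0 m1 m2 a b = {g \<in> L2 M. \<forall>f\<in>Fset M x0 m1 m2 a b. 0 \<le> (\<integral>x. f x * g x \<partial>M)}"

end

theory Submission
  imports Defs
begin

text \<open>
  Both sets are intersections of wedges (closed convex sets stable under positive scaling)
  in \<open>L\<^sup>2(\<mu>)\<close>. Every condition defining \<open>\<F>\<close>, including \<open>f \<ge> 0\<close> on \<open>B\<^sub>m\<^sub>2\<close> (read as:
  \<open>f\<^sub>-\<close> has no mass there), has the form ``the mass of \<open>(s f)\<^sub>+\<close> on a measurable set is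
  at most \<open>c \<integral> f\<close>''. Its left side is convex, positively homogeneous and continuous in
  \<open>L\<^sup>1\<close>, and on a probability space \<open>L\<^sup>2\<close>-convergence implies \<open>L\<^sup>1\<close>-convergence.
  \<open>\<G>\<close> is the dual cone of \<open>\<F>\<close>, an intersection of half-spaces that are closed by
  Cauchy-Schwarz.

  If \<open>f\<close> and \<open>-f\<close> lie in \<open>\<F>\<close>, adding their tail bounds at \<open>r = m\<^sub>2\<close> shows that \<open>f = 0\<close>
  a.e. outside \<open>B\<^sub>m\<^sub>2\<close>, while inside both \<open>f\<close> and \<open>-f\<close> are nonnegative. If \<open>g\<close> and \<open>-g\<close>
  lie in \<open>\<G>\<close>, then \<open>g\<close> is orthogonal to the functions \<open>1\<^sub>A + 1\<^sub>B\<^sub>m\<^sub>1 / (\<alpha>(R) \<mu>(B\<^sub>m\<^sub>1))\<close>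
  with \<open>A \<subseteq> B\<^sub>R\<close>, which lie in \<open>\<F>\<close> because \<open>\<alpha>(R) > 0\<close> and \<open>\<mu>(B\<^sub>m\<^sub>1) > 0\<close>. Taking
  differences, \<open>\<integral>\<^sub>A g = 0\<close> for every measurable \<open>A\<close> inside a ball, so \<open>g = 0\<close> a.e.
\<close>

lemma L2_integrable_mult:
  assumes "f \<in> L2 M" "g \<in> L2 M"
  shows "integrable M (\<lambda>x. f x * g x)"
proof (rule Bochner_Integration.integrable_bound)
  show "integrable M (\<lambda>x. (f x)\<^sup>2 + (g x)\<^sup>2)"
    using assms by (simp add: L2_def)
  show "(\<lambda>x. f x * g x) \<in> borel_measurable M"
    using assms by (simp add: L2_def borel_measurable_times)
  have "\<bar>a * b\<bar> \<le> a\<^sup>2 + b\<^sup>2" for a b :: real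
  proof -
    have "2 * \<bar>a * b\<bar> \<le> a\<^sup>2 + b\<^sup>2"
      using sum_squares_bound[of "\<bar>a\<bar>" "\<bar>b\<bar>"] by (simp add: abs_mult mult.assoc)
    then show ?thesis
      using abs_ge_zero[of "a * b"] by linarith
  qed
  then show "AE x in M. norm (f x * g x) \<le> norm ((f x)\<^sup>2 + (g x)\<^sup>2)"
    by simp
qed

lemma L2_linear_comb:
  assumes "f \<in> L2 M" "g \<in> L2 M"
  shows "(\<lambda>x. a * f x + b * g x) \<in> L2 M"
proof -
  have [measurable]: "f \<in> borel_measurable M" "g \<in> borel_measurable M"
    using assms by (simp_all add: L2_def)
  have "(\<lambda>x. (a * f x + b * g x)\<^sup>2) = (\<lambda>x. a\<^sup>2 * (f x)\<^sup>2 + 2 * a * b * (f x * g x) + b\<^sup>2 * (g x)\<^sup>2)"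
    by (simp add: fun_eq_iff power2_eq_square algebra_simps)
  then show ?thesis
    using assms L2_integrable_mult[OF assms] by (simp add: L2_def)
qed

lemma L2_diff: "f \<in> L2 M \<Longrightarrow> g \<in> L2 M \<Longrightarrow> (\<lambda>x. f x - g x) \<in> L2 M"
  using L2_linear_comb[of f M g 1 "-1"] by simp

lemma L2_scale: "f \<in> L2 M \<Longrightarrow> (\<lambda>x. c * f x) \<in> L2 M"
  using L2_linear_comb[of f M f c 0] by simp

lemma L2_zero: "(\<lambda>x. 0) \<in> L2 M"
  by (simp add: L2_def)

lemma (in finite_measure) L2_integrable: "f \<in> L2 M \<Longrightarrow> integrable M f"
  unfolding L2_def by (auto intro: square_integrable_imp_integrable)

lemma (in finite_measure) L2_indicator:
  assumes "A \<in> sets M"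
  shows "indicator A \<in> L2 M"
proof -
  have "(\<lambda>x. (indicator A x)\<^sup>2) = (indicator A :: 'a \<Rightarrow> real)"
    by (auto simp: indicator_def)
  then show ?thesis
    using assms by (simp add: L2_def less_top[symmetric])
qed

lemma L2_Cauchy_Schwarz:
  assumes "f \<in> L2 M" "g \<in> L2 M"
  shows "(\<integral>x. \<bar>f x * g x\<bar> \<partial>M) \<le> L2_norm M f * L2_norm M g"
proof -
  have [measurable]: "f \<in> borel_measurable M" "g \<in> borel_measurable M"
    using assms by (simp_all add: L2_def)
  have int: "integrable M (\<lambda>x. \<bar>f x * g x\<bar>)" "integrable M (\<lambda>x. (f x)\<^sup>2)" "integrable M (\<lambda>x. (g x)\<^sup>2)"
    using L2_integrable_mult[OF assms] assms by (simp_all add: L2_def)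
  have "(\<integral>\<^sup>+x. ennreal \<bar>f x\<bar> * ennreal \<bar>g x\<bar> \<partial>M)\<^sup>2
      \<le> (\<integral>\<^sup>+x. (ennreal \<bar>f x\<bar>)\<^sup>2 \<partial>M) * (\<integral>\<^sup>+x. (ennreal \<bar>g x\<bar>)\<^sup>2 \<partial>M)"
    by (rule Cauchy_Schwarz_nn_integral) auto
  then have "ennreal ((\<integral>x. \<bar>f x * g x\<bar> \<partial>M)\<^sup>2) \<le> ennreal ((\<integral>x. (f x)\<^sup>2 \<partial>M) * (\<integral>x. (g x)\<^sup>2 \<partial>M))"
    using int by (simp add: abs_mult ennreal_mult'[symmetric] ennreal_power nn_integral_eq_integral
        ennreal_mult[symmetric])
  then have "(\<integral>x. \<bar>f x * g x\<bar> \<partial>M)\<^sup>2 \<le> (\<integral>x. (f x)\<^sup>2 \<partial>M) * (\<integral>x. (g x)\<^sup>2 \<partial>M)"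
    by simp
  then show ?thesis
    unfolding L2_norm_def real_sqrt_mult[symmetric] by (simp add: real_le_rsqrt)
qed

lemma (in prob_space) L1_le_L2_norm:
  assumes "f \<in> L2 M"
  shows "(\<integral>x. \<bar>f x\<bar> \<partial>M) \<le> L2_norm M f"
proof -
  have "(\<lambda>x. 1) \<in> L2 M"
    using L2_indicator[of "space M"] by (simp add: indicator_def L2_def)
  moreover have "L2_norm M (\<lambda>x. 1) = 1"
    by (simp add: L2_norm_def prob_space)
  ultimately show ?thesis
    using L2_Cauchy_Schwarz[of "\<lambda>x. 1" M f] assms by simp
qed

lemma (in prob_space) L2_tendsto_imp_L1_tendsto:
  assumes "\<And>n. h n \<in> L2 M" "g \<in> L2 M" "(\<lambda>n. L2_norm M (\<lambda>x. h n x - g x)) \<longlonglongrightarrow> 0"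
  shows "(\<lambda>n. \<integral>x. \<bar>h n x - g x\<bar> \<partial>M) \<longlonglongrightarrow> 0"
proof (rule Lim_null_comparison[OF _ assms(3)])
  show "\<forall>\<^sub>F n in sequentially. norm (\<integral>x. \<bar>h n x - g x\<bar> \<partial>M) \<le> L2_norm M (\<lambda>x. h n x - g x)"
    using L1_le_L2_norm[OF L2_diff[OF assms(1,2)]] by (intro always_eventually) simp
qed

lemma tendsto_integral_L1:
  fixes u :: "nat \<Rightarrow> 'a \<Rightarrow> real"
  assumes "\<And>n. integrable M (u n)" "integrable M v"
    and "(\<lambda>n. \<integral>x. \<bar>u n x - v x\<bar> \<partial>M) \<longlonglongrightarrow> 0"
  shows "(\<lambda>n. \<integral>x. u n x \<partial>M) \<longlonglongrightarrow> (\<integral>x. v x \<partial>M)"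
proof -
  have "norm ((\<integral>x. u n x \<partial>M) - (\<integral>x. v x \<partial>M)) \<le> (\<integral>x. \<bar>u n x - v x\<bar> \<partial>M)" for n
    using integral_norm_bound[of M "\<lambda>x. u n x - v x"] assms(1,2) by simp
  then have "(\<lambda>n. (\<integral>x. u n x \<partial>M) - (\<integral>x. v x \<partial>M)) \<longlonglongrightarrow> 0"
    by (intro Lim_null_comparison[OF always_eventually assms(3)]) simp
  then show ?thesis
    by (simp add: LIM_zero_iff)
qed

lemma tendsto_integral_mult_L2:
  assumes "f \<in> L2 M" "\<And>n. h n \<in> L2 M" "g \<in> L2 M"
    and "(\<lambda>n. L2_norm M (\<lambda>x. h n x - g x)) \<longlonglongrightarrow> 0"
  shows "(\<lambda>n. \<integral>x. f x * h n x \<partial>M) \<longlonglongrightarrow> (\<integral>x. f x * g x \<partial>M)"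
proof (rule tendsto_integral_L1)
  show "\<And>n. integrable M (\<lambda>x. f x * h n x)" "integrable M (\<lambda>x. f x * g x)"
    using L2_integrable_mult assms(1-3) by blast+
  have "(\<integral>x. \<bar>f x * h n x - f x * g x\<bar> \<partial>M) \<le> L2_norm M f * L2_norm M (\<lambda>x. h n x - g x)" for n
    using L2_Cauchy_Schwarz[OF assms(1) L2_diff[OF assms(2,3)]]
    by (simp add: right_diff_distrib)
  then show "(\<lambda>n. \<integral>x. \<bar>f x * h n x - f x * g x\<bar> \<partial>M) \<longlonglongrightarrow> 0"
    by (intro Lim_null_comparison[OF always_eventually
          tendsto_mult_right_zero[OF assms(4), where c="L2_norm M f"]]) simp
qed

definition pos_mass :: "'a measure \<Rightarrow> 'a set \<Rightarrow> ('a \<Rightarrow> real) \<Rightarrow> real" where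
  "pos_mass M S f = (\<integral>x. indicator S x * max (f x) 0 \<partial>M)"

lemma pos_mass_nonneg: "0 \<le> pos_mass M S f"
  unfolding pos_mass_def by simp

lemma integrable_pos_part_on:
  fixes f :: "'a \<Rightarrow> real"
  assumes "integrable M f" "S \<in> sets M"
  shows "integrable M (\<lambda>x. indicator S x * max (f x) 0)"
  using integrable_mult_indicator[OF assms(2) Bochner_Integration.integrable_max[OF assms(1) integrable_zero]]
  by simp

lemma pos_mass_scale:
  assumes "0 \<le> c"
  shows "pos_mass M S (\<lambda>x. c * f x) = c * pos_mass M S f"
proof -
  have "(\<lambda>x. indicator S x * max (c * f x) 0) = (\<lambda>x. c * (indicator S x * max (f x) 0))"
    using assms by (auto simp: fun_eq_iff max_mult_distrib_left mult.left_commute)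
  then show ?thesis
    by (simp add: pos_mass_def)
qed

lemma pos_mass_convex:
  assumes "integrable M f" "integrable M g" "S \<in> sets M" "0 \<le> t" "t \<le> 1"
  shows "pos_mass M S (\<lambda>x. t * f x + (1 - t) * g x) \<le> t * pos_mass M S f + (1 - t) * pos_mass M S g"
proof -
  have "max (t * u + (1 - t) * v) 0 \<le> t * max u 0 + (1 - t) * max v 0" for u v :: real
    using mult_left_mono[of u "max u 0" t] mult_left_mono[of v "max v 0" "1 - t"] assms(4,5) by simp
  then have "(\<integral>x. indicator S x * max (t * f x + (1 - t) * g x) 0 \<partial>M)
      \<le> (\<integral>x. t * (indicator S x * max (f x) 0) + (1 - t) * (indicator S x * max (g x) 0) \<partial>M)"
    using assms
    by (intro integral_mono Bochner_Integration.integrable_add integrable_mult_right integrable_pos_part_on)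
      (auto simp: indicator_def)
  also have "\<dots> = t * pos_mass M S f + (1 - t) * pos_mass M S g"
    using assms by (simp add: pos_mass_def integrable_pos_part_on)
  finally show ?thesis
    by (simp add: pos_mass_def)
qed

lemma pos_mass_eq_0_iff:
  assumes "integrable M f" "S \<in> sets M"
  shows "pos_mass M S f = 0 \<longleftrightarrow> (AE x in M. x \<in> S \<longrightarrow> f x \<le> 0)"
proof -
  have "pos_mass M S f = 0 \<longleftrightarrow> (AE x in M. indicator S x * max (f x) 0 = 0)"
    unfolding pos_mass_def by (rule integral_nonneg_eq_0_iff_AE[OF integrable_pos_part_on[OF assms]]) simp
  moreover have "(indicator S x * max (f x) 0 = 0) \<longleftrightarrow> (x \<in> S \<longrightarrow> f x \<le> 0)" for x :: 'a
    by (auto simp: indicator_def max_def)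
  ultimately show ?thesis
    by simp
qed

lemma tendsto_pos_mass:
  assumes "\<And>n. integrable M (h n)" "integrable M g" "S \<in> sets M"
    and "(\<lambda>n. \<integral>x. \<bar>h n x - g x\<bar> \<partial>M) \<longlonglongrightarrow> 0"
  shows "(\<lambda>n. pos_mass M S (h n)) \<longlonglongrightarrow> pos_mass M S g"
  unfolding pos_mass_def
proof (rule tendsto_integral_L1)
  show h: "\<And>n. integrable M (\<lambda>x. indicator S x * max (h n x) 0)"
    and g: "integrable M (\<lambda>x. indicator S x * max (g x) 0)"
    using assms by (simp_all add: integrable_pos_part_on)
  have "(\<integral>x. \<bar>indicator S x * max (h n x) 0 - indicator S x * max (g x) 0\<bar> \<partial>M)
      \<le> (\<integral>x. \<bar>h n x - g x\<bar> \<partial>M)" for n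
    using assms h g by (intro integral_mono) (auto simp: indicator_def max_def)
  then show "(\<lambda>n. \<integral>x. \<bar>indicator S x * max (h n x) 0 - indicator S x * max (g x) 0\<bar> \<partial>M) \<longlonglongrightarrow> 0"
    by (intro Lim_null_comparison[OF always_eventually assms(4)]) simp
qed

definition L2_wedge :: "'a measure \<Rightarrow> ('a \<Rightarrow> real) set \<Rightarrow> bool" where
  "L2_wedge M C \<longleftrightarrow>
     C \<subseteq> L2 M \<and>
     (\<forall>f g. (\<forall>n. f n \<in> C) \<and> g \<in> L2 M \<and>
        (\<lambda>n. L2_norm M (\<lambda>x. f n x - g x)) \<longlonglongrightarrow> 0 \<longrightarrow> g \<in> C) \<and>
     (\<forall>f\<in>C. \<forall>g\<in>C. \<forall>t::real. 0 \<le> t \<and> t \<le> 1 \<longrightarrow> (\<lambda>x. t * f x + (1 - t) * g x) \<in> C) \<and>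
     (\<forall>f\<in>C. \<forall>c::real. c > 0 \<longrightarrow> (\<lambda>x. c * f x) \<in> C) \<and>
     (\<lambda>x. 0) \<in> C"

lemma L2_cone_iff_wedge:
  "L2_cone M C \<longleftrightarrow> L2_wedge M C \<and> (\<forall>f\<in>C. (\<lambda>x. - f x) \<in> C \<longrightarrow> (AE x in M. f x = 0))"
  unfolding L2_cone_def L2_wedge_def by (simp only: conj_assoc)

lemma L2_wedge_Inter:
  assumes "\<C> \<noteq> {}" and wedge: "\<And>C. C \<in> \<C> \<Longrightarrow> L2_wedge M C"
  shows "L2_wedge M (\<Inter>\<C>)"
  unfolding L2_wedge_def
proof (intro conjI allI impI ballI)
  show "\<Inter>\<C> \<subseteq> L2 M"
    using assms unfolding L2_wedge_def by blast
next
  fix f g assume H: "(\<forall>n. f n \<in> \<Inter>\<C>) \<and> g \<in> L2 M \<and> (\<lambda>n. L2_norm M (\<lambda>x. f n x - g x)) \<longlonglongrightarrow> 0"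
  show "g \<in> \<Inter>\<C>"
  proof
    fix C assume "C \<in> \<C>"
    with H wedge[of C] show "g \<in> C"
      unfolding L2_wedge_def by blast
  qed
next
  fix f g and t :: real assume "f \<in> \<Inter>\<C>" "g \<in> \<Inter>\<C>" "0 \<le> t \<and> t \<le> 1"
  with wedge show "(\<lambda>x. t * f x + (1 - t) * g x) \<in> \<Inter>\<C>"
    unfolding L2_wedge_def by blast
next
  fix f and c :: real assume "f \<in> \<Inter>\<C>" "0 < c"
  with wedge show "(\<lambda>x. c * f x) \<in> \<Inter>\<C>"
    unfolding L2_wedge_def by blast
next
  show "(\<lambda>x. 0) \<in> \<Inter>\<C>"
    using wedge unfolding L2_wedge_def by blast
qed

lemma L2_wedge_L2: "L2_wedge M (L2 M)"
  unfolding L2_wedge_def using L2_linear_comb L2_scale L2_zero by blast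

lemma L2_wedge_dual_halfspace:
  assumes f: "f \<in> L2 M"
  shows "L2_wedge M {g \<in> L2 M. 0 \<le> (\<integral>x. f x * g x \<partial>M)}" (is "L2_wedge M ?H")
  unfolding L2_wedge_def
proof (intro conjI allI impI ballI)
  fix h g assume lim: "(\<forall>n. h n \<in> ?H) \<and> g \<in> L2 M \<and> (\<lambda>n. L2_norm M (\<lambda>x. h n x - g x)) \<longlonglongrightarrow> 0"
  then have "(\<lambda>n. \<integral>x. f x * h n x \<partial>M) \<longlonglongrightarrow> (\<integral>x. f x * g x \<partial>M)"
    using tendsto_integral_mult_L2[OF f] by blast
  then have "0 \<le> (\<integral>x. f x * g x \<partial>M)"
    by (rule LIMSEQ_le_const) (use lim in auto)
  then show "g \<in> ?H"
    using lim by blast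
next
  fix g h and t :: real
  assume g: "g \<in> ?H" and h: "h \<in> ?H" and t: "0 \<le> t \<and> t \<le> 1"
  have "(\<integral>x. f x * (t * g x + (1 - t) * h x) \<partial>M)
      = (\<integral>x. t * (f x * g x) + (1 - t) * (f x * h x) \<partial>M)"
    by (simp add: algebra_simps)
  also have "\<dots> = t * (\<integral>x. f x * g x \<partial>M) + (1 - t) * (\<integral>x. f x * h x \<partial>M)"
    using L2_integrable_mult[OF f] g h by simp
  finally show "(\<lambda>x. t * g x + (1 - t) * h x) \<in> ?H"
    using g h t by (simp add: L2_linear_comb)
next
  fix g and c :: real
  assume "g \<in> ?H" "0 < c"
  then show "(\<lambda>x. c * g x) \<in> ?H"
    using L2_scale[of g M c] by (simp add: mult.left_commute)
qed (auto simp: L2_zero)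

lemma L2_wedge_dual:
  assumes "C \<subseteq> L2 M"
  shows "L2_wedge M {g \<in> L2 M. \<forall>f\<in>C. 0 \<le> (\<integral>x. f x * g x \<partial>M)}"
proof -
  have "{g \<in> L2 M. \<forall>f\<in>C. 0 \<le> (\<integral>x. f x * g x \<partial>M)}
      = \<Inter>({L2 M} \<union> (\<lambda>f. {g \<in> L2 M. 0 \<le> (\<integral>x. f x * g x \<partial>M)}) ` C)"
    by auto
  also have "L2_wedge M \<dots>"
    using assms by (intro L2_wedge_Inter) (auto intro: L2_wedge_L2 L2_wedge_dual_halfspace)
  finally show ?thesis .
qed

definition pos_mass_constraint :: "'a measure \<Rightarrow> 'a set \<Rightarrow> real \<Rightarrow> real \<Rightarrow> ('a \<Rightarrow> real) set" where
  "pos_mass_constraint M S s c = {f \<in> L2 M. pos_mass M S (\<lambda>x. s * f x) \<le> c * (\<integral>x. f x \<partial>M)}"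

lemma (in prob_space) pos_mass_constraint_closed:
  assumes S: "S \<in> sets M" and h: "\<And>n. h n \<in> pos_mass_constraint M S s c" and g: "g \<in> L2 M"
    and lim: "(\<lambda>n. L2_norm M (\<lambda>x. h n x - g x)) \<longlonglongrightarrow> 0"
  shows "g \<in> pos_mass_constraint M S s c"
proof -
  have hL: "h n \<in> L2 M" for n
    using h by (simp add: pos_mass_constraint_def)
  have L1: "(\<lambda>n. \<integral>x. \<bar>h n x - g x\<bar> \<partial>M) \<longlonglongrightarrow> 0"
    by (rule L2_tendsto_imp_L1_tendsto[OF hL g lim])
  have "\<bar>s * h n x - s * g x\<bar> = \<bar>s\<bar> * \<bar>h n x - g x\<bar>" for n x
    by (metis abs_mult right_diff_distrib)
  then have sL1: "(\<lambda>n. \<integral>x. \<bar>s * h n x - s * g x\<bar> \<partial>M) \<longlonglongrightarrow> 0"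
    using tendsto_mult_right_zero[OF L1, of "\<bar>s\<bar>"] by (simp only: integral_mult_right_zero)
  have "(\<lambda>n. pos_mass M S (\<lambda>x. s * h n x)) \<longlonglongrightarrow> pos_mass M S (\<lambda>x. s * g x)"
    by (rule tendsto_pos_mass[OF _ _ S sL1]) (simp_all add: L2_integrable hL g)
  moreover have "(\<lambda>n. c * (\<integral>x. h n x \<partial>M)) \<longlonglongrightarrow> c * (\<integral>x. g x \<partial>M)"
    by (intro tendsto_mult_left tendsto_integral_L1[OF _ _ L1]) (simp_all add: L2_integrable hL g)
  moreover have "pos_mass M S (\<lambda>x. s * h n x) \<le> c * (\<integral>x. h n x \<partial>M)" for n
    using h[of n] by (simp add: pos_mass_constraint_def)
  ultimately have "pos_mass M S (\<lambda>x. s * g x) \<le> c * (\<integral>x. g x \<partial>M)"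
    by (intro LIMSEQ_le) auto
  then show ?thesis
    using g by (simp add: pos_mass_constraint_def)
qed

lemma (in prob_space) L2_wedge_pos_mass_constraint:
  assumes S: "S \<in> sets M"
  shows "L2_wedge M (pos_mass_constraint M S s c)" (is "L2_wedge M ?C")
  unfolding L2_wedge_def
proof (intro conjI allI impI ballI)
  fix f g and t :: real
  assume f: "f \<in> ?C" and g: "g \<in> ?C" and t: "0 \<le> t \<and> t \<le> 1"
  have int: "integrable M (\<lambda>x. s * f x)" "integrable M (\<lambda>x. s * g x)"
    using f g by (simp_all add: pos_mass_constraint_def L2_integrable)
  have "(\<lambda>x. s * (t * f x + (1 - t) * g x)) = (\<lambda>x. t * (s * f x) + (1 - t) * (s * g x))"
    by (simp add: fun_eq_iff algebra_simps)
  then have "pos_mass M S (\<lambda>x. s * (t * f x + (1 - t) * g x))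
      \<le> t * pos_mass M S (\<lambda>x. s * f x) + (1 - t) * pos_mass M S (\<lambda>x. s * g x)"
    using pos_mass_convex[OF int S] t by simp
  also have "\<dots> \<le> t * (c * (\<integral>x. f x \<partial>M)) + (1 - t) * (c * (\<integral>x. g x \<partial>M))"
    using f g t by (intro add_mono mult_left_mono) (simp_all add: pos_mass_constraint_def)
  also have "\<dots> = c * (\<integral>x. t * f x + (1 - t) * g x \<partial>M)"
    using f g by (simp add: pos_mass_constraint_def L2_integrable algebra_simps)
  finally show "(\<lambda>x. t * f x + (1 - t) * g x) \<in> ?C"
    using f g by (simp add: pos_mass_constraint_def L2_linear_comb)
next
  fix f and a :: real
  assume f: "f \<in> ?C" and a: "0 < a"
  have "pos_mass M S (\<lambda>x. s * (a * f x)) = a * pos_mass M S (\<lambda>x. s * f x)"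
    using pos_mass_scale[of a M S "\<lambda>x. s * f x"] a by (simp add: mult.left_commute)
  also have "\<dots> \<le> a * (c * (\<integral>x. f x \<partial>M))"
    using f a by (simp add: pos_mass_constraint_def)
  finally show "(\<lambda>x. a * f x) \<in> ?C"
    using f L2_scale[of f M a] by (simp add: pos_mass_constraint_def mult.left_commute)
next
  fix h g
  assume "(\<forall>n. h n \<in> ?C) \<and> g \<in> L2 M \<and> (\<lambda>n. L2_norm M (\<lambda>x. h n x - g x)) \<longlonglongrightarrow> 0"
  then show "g \<in> ?C"
    using pos_mass_constraint_closed[OF S] by blast
qed (auto simp: pos_mass_constraint_def pos_mass_def L2_zero)

lemma cball_sets_borel:
  fixes x0 :: "'a::metric_space"
  assumes "sets M = sets borel"
  shows "cball x0 r \<in> sets M" "- cball x0 r \<in> sets M"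
  using assms by (simp_all add: borel_open open_Compl)

lemma Fset_eq_Inter:
  fixes M :: "'a::metric_space measure"
  assumes "finite_measure M" "sets M = sets borel"
  shows "Fset M x0 m1 m2 a b = \<Inter>({pos_mass_constraint M (cball x0 m2) (-1) 0}
      \<union> (\<lambda>r. pos_mass_constraint M (- cball x0 r) 1 (a r)) ` {m1..}
      \<union> (\<lambda>r. pos_mass_constraint M (- cball x0 r) (-1) (b r)) ` {m2..})"
proof -
  interpret finite_measure M by fact
  have ball: "(AE x in M. x \<in> cball x0 m2 \<longrightarrow> 0 \<le> f x)
      \<longleftrightarrow> pos_mass M (cball x0 m2) (\<lambda>x. - f x) \<le> 0" if "f \<in> L2 M" for f
  proof -
    have "pos_mass M (cball x0 m2) (\<lambda>x. - f x) \<le> 0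
        \<longleftrightarrow> pos_mass M (cball x0 m2) (\<lambda>x. - f x) = 0"
      using pos_mass_nonneg[of M "cball x0 m2" "\<lambda>x. - f x"] by linarith
    also have "\<dots> \<longleftrightarrow> (AE x in M. x \<in> cball x0 m2 \<longrightarrow> - f x \<le> 0)"
      using that assms(2) by (intro pos_mass_eq_0_iff) (simp_all add: L2_integrable cball_sets_borel)
    finally show ?thesis
      by simp
  qed
  show ?thesis
    unfolding Fset_def pos_mass_constraint_def pos_mass_def[symmetric] using ball by auto
qed

lemma L2_wedge_Fset:
  fixes M :: "'a::metric_space measure"
  assumes "prob_space M" "sets M = sets borel"
  shows "L2_wedge M (Fset M x0 m1 m2 a b)"
proof -
  interpret prob_space M by fact
  show ?thesis
    unfolding Fset_eq_Inter[OF finite_measure_axioms assms(2)] using assms(2)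
    by (intro L2_wedge_Inter) (auto intro!: L2_wedge_pos_mass_constraint cball_sets_borel)
qed

lemma Fset_pointed:
  fixes M :: "'a::metric_space measure"
  assumes "finite_measure M" "sets M = sets borel" "m1 \<le> m2"
    and f: "f \<in> Fset M x0 m1 m2 a b" and nf: "(\<lambda>x. - f x) \<in> Fset M x0 m1 m2 a b"
  shows "AE x in M. f x = 0"
proof -
  interpret finite_measure M by fact
  let ?S = "- cball x0 m2"
  have int: "integrable M f" "integrable M (\<lambda>x. - f x)"
    using f by (simp_all add: Fset_def L2_integrable)
  have "pos_mass M ?S f \<le> a m2 * (\<integral>x. f x \<partial>M)"
    and "pos_mass M ?S (\<lambda>x. - f x) \<le> - (a m2 * (\<integral>x. f x \<partial>M))"
    using f nf assms(3) by (auto simp: Fset_def pos_mass_def)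
  then have "pos_mass M ?S f = 0" "pos_mass M ?S (\<lambda>x. - f x) = 0"
    using pos_mass_nonneg[of M ?S f] pos_mass_nonneg[of M ?S "\<lambda>x. - f x"] by linarith+
  then have "AE x in M. x \<in> ?S \<longrightarrow> f x \<le> 0" "AE x in M. x \<in> ?S \<longrightarrow> - f x \<le> 0"
    using int assms(2) by (simp_all add: pos_mass_eq_0_iff cball_sets_borel)
  moreover have "AE x in M. x \<in> cball x0 m2 \<longrightarrow> 0 \<le> f x"
    and "AE x in M. x \<in> cball x0 m2 \<longrightarrow> 0 \<le> - f x"
    using f nf by (simp_all add: Fset_def)
  ultimately show ?thesis
    by eventually_elim auto
qed

lemma tail_function_antimono: "tail_function a \<Longrightarrow> 0 < r \<Longrightarrow> r \<le> s \<Longrightarrow> a s \<le> a r"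
  unfolding tail_function_def by blast

lemma tail_function_nonneg: "tail_function a \<Longrightarrow> 0 < r \<Longrightarrow> 0 \<le> a r"
  unfolding tail_function_def by blast

lemma indicator_test_function_in_Fset:
  fixes M :: "'a::metric_space measure"
  assumes "prob_space M" "sets M = sets borel" "0 < m1" "m1 \<le> m2"
    and a: "tail_function a" "0 < a R" and b: "tail_function b"
    and B: "measure M (cball x0 m1) > 0"
    and R: "m1 \<le> R" and A: "A \<in> sets M" "A \<subseteq> cball x0 R"
  shows "(\<lambda>x. indicator A x + indicator (cball x0 m1) x / (a R * measure M (cball x0 m1)))
    \<in> Fset M x0 m1 m2 a b"
proof -
  interpret prob_space M by fact
  define c where "c = 1 / (a R * measure M (cball x0 m1))"
  define f where "f = (\<lambda>x. indicator A x + c * indicator (cball x0 m1) x)"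
  have sets: "cball x0 m1 \<in> sets M" "\<And>r. - cball x0 r \<in> sets M"
    using assms(2) by (simp_all add: cball_sets_borel)
  have f_nonneg: "0 \<le> f x" for x
    using a B by (simp add: f_def c_def)
  have f_L2: "f \<in> L2 M"
    using L2_linear_comb[OF L2_indicator[OF A(1)] L2_indicator[OF sets(1)], of 1 c]
    by (simp add: f_def)
  have int_f: "(\<integral>x. f x \<partial>M) = measure M A + 1 / a R"
    using A(1) sets a B by (simp add: f_def c_def less_top[symmetric])
  have outside_m1: "f x = indicator A x" if "x \<notin> cball x0 m1" for x
    using that by (simp add: f_def)
  have pos_bound: "pos_mass M (- cball x0 r) f \<le> a r * (\<integral>x. f x \<partial>M)" if r: "m1 \<le> r" for r
  proof (cases "R \<le> r")
    case True
    then have "indicator (- cball x0 r) x * max (f x) 0 = 0" for x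
      using A(2) r outside_m1[of x] by (cases "x \<in> cball x0 r") (auto simp: subset_iff indicator_def)
    then have "pos_mass M (- cball x0 r) f = 0"
      unfolding pos_mass_def by (simp only: integral_zero)
    then show ?thesis
      using tail_function_nonneg[OF a(1), of r] r assms(3) f_nonneg by simp
  next
    case False
    have "indicator (- cball x0 r) x * max (f x) 0 \<le> 1" for x
      using r outside_m1[of x] by (auto simp: indicator_def)
    then have "pos_mass M (- cball x0 r) f \<le> (\<integral>x. 1 \<partial>M)"
      unfolding pos_mass_def using integrable_pos_part_on[OF L2_integrable[OF f_L2] sets(2)]
      by (intro integral_mono) simp_all
    also have "\<dots> = a R * (1 / a R)"
      using a by (simp add: prob_space)
    also have "\<dots> \<le> a r * (\<integral>x. f x \<partial>M)"
    proof (rule mult_mono)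
      show "a R \<le> a r"
        using False r assms(3) by (intro tail_function_antimono[OF a(1)]) auto
      show "1 / a R \<le> (\<integral>x. f x \<partial>M)"
        unfolding int_f by simp
    qed (use a tail_function_nonneg[OF a(1), of r] r assms(3) in auto)
    finally show ?thesis .
  qed
  have neg_bound: "pos_mass M (- cball x0 r) (\<lambda>x. - f x) \<le> b r * (\<integral>x. f x \<partial>M)" if r: "m2 \<le> r" for r
  proof -
    have "max (- f x) 0 = 0" for x
      using f_nonneg[of x] by simp
    then have "pos_mass M (- cball x0 r) (\<lambda>x. - f x) = 0"
      by (simp add: pos_mass_def)
    then show ?thesis
      using tail_function_nonneg[OF b, of r] r assms(3,4) f_nonneg by simp
  qed
  have "f \<in> Fset M x0 m1 m2 a b"
    using f_L2 f_nonneg pos_bound neg_bound by (simp add: Fset_def pos_mass_def)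
  then show ?thesis
    by (simp add: f_def c_def)
qed

lemma AE_of_AE_on_cballs:
  fixes x0 :: "'a::metric_space"
  assumes "\<And>R. m \<le> R \<Longrightarrow> AE x in M. x \<in> cball x0 R \<longrightarrow> P x"
  shows "AE x in M. P x"
proof -
  have "AE x in M. \<forall>n::nat. x \<in> cball x0 (m + real n) \<longrightarrow> P x"
    unfolding AE_all_countable by (intro allI assms) simp
  then show ?thesis
  proof (rule eventually_mono)
    fix x assume "\<forall>n::nat. x \<in> cball x0 (m + real n) \<longrightarrow> P x"
    moreover obtain n :: nat where "dist x0 x - m \<le> real n"
      using real_arch_simple by blast
    then have "x \<in> cball x0 (m + real n)"
      by simp
    ultimately show "P x"
      by blast
  qed
qed

lemma AE_eq_0_on_if_set_integrals_eq_0: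
  fixes g :: "'a \<Rightarrow> real"
  assumes g: "integrable M g" and B: "B \<in> sets M"
    and zero: "\<And>A. A \<in> sets M \<Longrightarrow> A \<subseteq> B \<Longrightarrow> (\<integral>x. indicator A x * g x \<partial>M) = 0"
  shows "AE x in M. x \<in> B \<longrightarrow> g x = 0"
proof -
  have "AE x in M. indicator B x * g x = 0"
  proof (rule density_unique_real)
    show "integrable M (\<lambda>x. indicator B x * g x)"
      using integrable_mult_indicator[OF B g] by simp
    fix A assume "A \<in> sets M"
    then show "(\<integral>x\<in>A. indicator B x * g x \<partial>M) = (\<integral>x\<in>A. 0 \<partial>M)"
      using zero[of "A \<inter> B"] B by (simp add: set_lebesgue_integral_def indicator_inter_arith mult.assoc)
  qed simp
  then show ?thesis
    by eventually_elim (auto simp: indicator_def)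
qed

lemma Gset_pointed:
  fixes M :: "'a::metric_space measure"
  assumes "prob_space M" "sets M = sets borel" "0 < m1" "m1 \<le> m2"
    and "tail_function a" "tail_function b" "measure M (cball x0 m1) > 0" "\<forall>r>0. 0 < a r"
    and g: "g \<in> Gset M x0 m1 m2 a b" and ng: "(\<lambda>x. - g x) \<in> Gset M x0 m1 m2 a b"
  shows "AE x in M. g x = 0"
proof -
  interpret prob_space M by fact
  have gL: "g \<in> L2 M"
    using g by (simp add: Gset_def)
  have orth: "(\<integral>x. f x * g x \<partial>M) = 0" if "f \<in> Fset M x0 m1 m2 a b" for f
    using g ng that by (force simp: Gset_def)
  have "AE x in M. x \<in> cball x0 R \<longrightarrow> g x = 0" if R: "m1 \<le> R" for R
  proof (rule AE_eq_0_on_if_set_integrals_eq_0[OF L2_integrable[OF gL]])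
    show "cball x0 R \<in> sets M"
      using assms(2) by (simp add: cball_sets_borel)
    let ?\<phi> = "\<lambda>A x. indicator A x + indicator (cball x0 m1) x / (a R * measure M (cball x0 m1))"
    have test: "?\<phi> A \<in> Fset M x0 m1 m2 a b" if "A \<in> sets M" "A \<subseteq> cball x0 R" for A
      by (rule indicator_test_function_in_Fset) (use assms R that in auto)
    have test_int: "integrable M (\<lambda>x. ?\<phi> A x * g x)" if "A \<in> sets M" "A \<subseteq> cball x0 R" for A
      using test[OF that] gL by (intro L2_integrable_mult) (simp_all add: Fset_def)
    fix A assume A: "A \<in> sets M" "A \<subseteq> cball x0 R"
    have "(\<integral>x. indicator A x * g x \<partial>M) = (\<integral>x. ?\<phi> A x * g x - ?\<phi> {} x * g x \<partial>M)"
      by (simp add: algebra_simps)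
    also have "\<dots> = (\<integral>x. ?\<phi> A x * g x \<partial>M) - (\<integral>x. ?\<phi> {} x * g x \<partial>M)"
      by (rule Bochner_Integration.integral_diff[OF test_int[OF A] test_int]) auto
    also have "\<dots> = 0"
      using orth[OF test[OF A]] orth[OF test[of "{}"]] by simp
    finally show "(\<integral>x. indicator A x * g x \<partial>M) = 0" .
  qed
  then show ?thesis
    by (rule AE_of_AE_on_cballs)
qed

theorem lemma3p1:
  fixes \<mu> :: "'a::polish_space measure" and x0 :: 'a
    and m1 m2 :: real and \<alpha> \<alpha>t :: "real \<Rightarrow> real"
  assumes "prob_space \<mu>" and "sets \<mu> = sets borel"
    and "0 < m1" and "m1 \<le> m2"
    and "tail_function \<alpha>" and "tail_function \<alpha>t"
    and "measure \<mu> (cball x0 m1) > 0"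
    and "\<forall>r>0. \<alpha> r > 0"
  shows "L2_cone \<mu> (Fset \<mu> x0 m1 m2 \<alpha> \<alpha>t) \<and> L2_cone \<mu> (Gset \<mu> x0 m1 m2 \<alpha> \<alpha>t)"
proof -
  interpret prob_space \<mu> by fact
  have "L2_wedge \<mu> (Fset \<mu> x0 m1 m2 \<alpha> \<alpha>t)"
    by (rule L2_wedge_Fset[OF assms(1,2)])
  moreover have "L2_wedge \<mu> (Gset \<mu> x0 m1 m2 \<alpha> \<alpha>t)"
    unfolding Gset_def by (rule L2_wedge_dual) (auto simp: Fset_def)
  ultimately show ?thesis
    unfolding L2_cone_iff_wedge
    using Fset_pointed[OF finite_measure_axioms assms(2,4)] Gset_pointed[OF assms] by blast
qed

end
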